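(* Let $\mathcal{C}$ be an $[n,k]$ cyclic code over $\mathbb{F}_q$ with $\gcd(n,q)=1$ and composite length $n$. Let $\tau=\{x_1,\ldots,x_L\}$ be a chain of divisors of $n$ and assume the coordinates of $\mathcal{C}$ are permuted according to the ordering $\gamma$ determined by $\tau$. Put $x_{L+1}=n$. Then $$\max_{i\in[0,n]} s_i\le\min\Big\{k,\ n-k,\ \sum_{i=1}^{L}\Big(\frac{x_{i+1}}{x_i}-1\Big)p^{x_i}+x_1-k,\ \sum_{i=1}^{L}\Big(\frac{x_{i+1}}{x_i}-1\Big)(x_i-p_{x_i})+x_1-(n-k)\Big\}.$$
   Context: Chain: a set $\tau=\{x_1,\ldots,x_L\}$ of divisors of $n$ other than $1$ and $n$ with $x_a\mid x_b$ and $x_a\ne x_b$ for $a<b$. Support sets: for $y\mid n$, the length-$y$ support sets are $\{j\in\{0,\ldots,n-1\}: j\equiv a \bmod n/y\}$, $a\in\{0,\ldots,n/y-1\}$. Ordering $\gamma$: for $1\le l\le L$, each length-$x_{l+1}$ support set $\{j: j\equiv b\bmod n/x_{l+1}\}$ is the disjoint union of the length-$x_l$ support sets $\{j:j\equiv a\bmod n/x_l\}$ with $a\equiv b \bmod n/x_{l+1}$, its children, ordered by increasing $a$. Starting from $\{0,\ldots,n-1\}$, list the length-$x_1$ support sets in depth-first order of this tree (children in the stated order), each with its elements in increasing order; the resulting sequence $\gamma=(\gamma(0),\ldots,\gamma(n-1))$ is a permutation of $\{0,\ldots,n-1\}$, and the permuted code is $\{(c_{\gamma(0)},\ldots,c_{\gamma(n-1)}):\underline{c}\in\mathcal{C}\}$.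 (E.g. $n=16$, $\tau=\{4,8\}$ gives $\gamma=(0,4,8,12,2,6,10,14,1,5,9,13,3,7,11,15)$.) For the permuted code and $0\le i\le n$: $p_i$ is the dimension of $\{\underline{c}: c_i=\cdots=c_{n-1}=0\}$, $f_i$ the dimension of $\{\underline{c}: c_0=\cdots=c_{i-1}=0\}$, $p^i$ the dimension of the code punctured to the first $i$ coordinates $\{(c_0,\ldots,c_{i-1})\}$, and the state complexity is $s_i=k-p_i-f_i$ (the base-$q$ logarithm of the number of vertices at level $i$ of the minimal trellis). *)

theory Defs
  imports Complex_Main "HOL-Library.Function_Algebras" "HOL-Computational_Algebra.Primes"
begin

text \<open>Words of length n over a field are functions nat => 'a vanishing outside {0..<n}.
  Scalar multiplication on words:\<close>
definition wscale :: "'a::field \<Rightarrow> (nat \<Rightarrow> 'a) \<Rightarrow> (nat \<Rightarrow> 'a)" where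
  "wscale a c = (\<lambda>j. a * c j)"

definition wdim :: "(nat \<Rightarrow> 'a::field) set \<Rightarrow> nat" where
  "wdim S = vector_space.dim wscale S"

definition linear_code :: "nat \<Rightarrow> (nat \<Rightarrow> 'a::field) set \<Rightarrow> bool" where
  "linear_code n C \<longleftrightarrow> module.subspace wscale C \<and> (\<forall>c\<in>C. \<forall>j\<ge>n. c j = 0)"

definition cshift :: "nat \<Rightarrow> (nat \<Rightarrow> 'a::zero) \<Rightarrow> (nat \<Rightarrow> 'a)" where
  "cshift n c = (\<lambda>j. if j < n then c ((j + n - 1) mod n) else 0)"

definition cyclic_code :: "nat \<Rightarrow> (nat \<Rightarrow> 'a::field) set \<Rightarrow> bool" where
  "cyclic_code n C \<longleftrightarrow> linear_code n C \<and> (\<forall>c\<in>C. cshift n c \<in> C)"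

definition divisor_chain :: "nat \<Rightarrow> nat list \<Rightarrow> bool" where
  "divisor_chain n xs \<longleftrightarrow> xs \<noteq> [] \<and> (\<forall>x\<in>set xs. x dvd n \<and> x \<noteq> 1 \<and> x \<noteq> n) \<and>
     (\<forall>a. Suc a < length xs \<longrightarrow> xs ! a dvd xs ! Suc a \<and> xs ! a \<noteq> xs ! Suc a)"

text \<open>Depth-first listing of the support-set tree. gam_dfs n y b zs lists the
  node {j. j mod (n div y) = b} of length y, whose descendants have lengths zs (descending).\<close>
primrec gam_dfs :: "nat \<Rightarrow> nat \<Rightarrow> nat \<Rightarrow> nat list \<Rightarrow> nat list" where
  "gam_dfs n y b [] = filter (\<lambda>j. j mod (n div y) = b) [0..<n]"
| "gam_dfs n y b (z # zs) =
     concat (map (\<lambda>a. gam_dfs n z a zs) (filter (\<lambda>a. a mod (n div y) = b) [0..<n div z]))"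

definition gamma_order :: "nat \<Rightarrow> nat list \<Rightarrow> nat list" where
  "gamma_order n xs = gam_dfs n n 0 (rev xs)"

definition permute_code :: "nat \<Rightarrow> nat list \<Rightarrow> (nat \<Rightarrow> 'a::zero) set \<Rightarrow> (nat \<Rightarrow> 'a) set" where
  "permute_code n g C = (\<lambda>c. \<lambda>i. if i < n then c (g ! i) else 0) ` C"

definition past_dim :: "nat \<Rightarrow> (nat \<Rightarrow> 'a::field) set \<Rightarrow> nat \<Rightarrow> nat" where
  "past_dim n C i = wdim {c\<in>C. \<forall>j. i \<le> j \<and> j < n \<longrightarrow> c j = 0}"

definition future_dim :: "nat \<Rightarrow> (nat \<Rightarrow> 'a::field) set \<Rightarrow> nat \<Rightarrow> nat" where
  "future_dim n C i = wdim {c\<in>C. \<forall>j<i. c j = 0}"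

definition punct_dim :: "(nat \<Rightarrow> 'a::field) set \<Rightarrow> nat \<Rightarrow> nat" where
  "punct_dim C i = wdim ((\<lambda>c j. if j < i then c j else 0) ` C)"

definition state_cx :: "nat \<Rightarrow> (nat \<Rightarrow> 'a::field) set \<Rightarrow> nat \<Rightarrow> int" where
  "state_cx n C i = int (wdim C) - int (past_dim n C i) - int (future_dim n C i)"

end

(*
  By rank--nullity, the state complexity of a linear [n,k] code at position i is
  s_i = p^[0,i) + p^[i,n) - k = k - p_[0,i) - p_[i,n), where p^S is the dimension of the code
  punctured to the positions S and p_S that of its subcode supported on S. The first is
  subadditive and the second superadditive over disjoint sets of positions. A cyclic shift
  maps support sets of a given length onto each other, so a cyclic code has the same p^S and
  p_S on all of them; and the ordering gamma lists each length-x_l support set as an aligned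
  block of x_l consecutive positions. Splitting [0,n) into these blocks level by level, the cut
  at i passes through only one block per level, while each other block lies on one side of
  the cut and contributes its common value. This yields the last two bounds; the first two
  are immediate.
*)

theory Submission
  imports Defs "HOL-Library.Disjoint_Sets"
begin

interpretation W: vector_space "wscale :: 'a::field \<Rightarrow> (nat \<Rightarrow> 'a) \<Rightarrow> (nat \<Rightarrow> 'a)"
  by unfold_locales (auto simp: wscale_def fun_eq_iff algebra_simps)

section \<open>Finite-dimensional subspaces of arbitrary vector spaces\<close>

context vector_space
begin

lemma basis_exists_finite_span:
  assumes "V \<subseteq> span E" "finite E"
  obtains B where "B \<subseteq> V" "independent B" "V \<subseteq> span B" "card B = dim V" "finite B"
proof -
  obtain B where B: "B \<subseteq> V" "independent B" "V \<subseteq> span B" "card B = dim V"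
    using basis_exists by blast
  moreover have "finite B"
    using independent_span_bound[OF assms(2) B(2)] B(1) assms(1) by blast
  ultimately show ?thesis using that by blast
qed

lemma dim_mono_finite_span:
  assumes "V \<subseteq> span W" "W \<subseteq> span E" "finite E"
  shows "dim V \<le> dim W"
proof -
  have "V \<subseteq> span E"
    using assms(1,2) span_minimal[OF assms(2) subspace_span] by blast
  then obtain A where A: "A \<subseteq> V" "independent A" "card A = dim V"
    using basis_exists_finite_span[OF _ assms(3)] by metis
  obtain B where B: "W \<subseteq> span B" "card B = dim W" "finite B"
    using basis_exists_finite_span[OF assms(2,3)] by metis
  have "A \<subseteq> span B"
    using A(1) assms(1) span_minimal[OF B(1) subspace_span] by blast
  from independent_span_bound[OF B(3) A(2) this] show ?thesis
    using A(3) B(2) by simp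
qed

lemma dim_Un_le_finite_span:
  assumes "X \<subseteq> span E" "Y \<subseteq> span E" "finite E"
  shows "dim (X \<union> Y) \<le> dim X + dim Y"
proof -
  obtain A where A: "X \<subseteq> span A" "card A = dim X" "finite A"
    using basis_exists_finite_span[OF assms(1,3)] by metis
  obtain B where B: "Y \<subseteq> span B" "card B = dim Y" "finite B"
    using basis_exists_finite_span[OF assms(2,3)] by metis
  have "X \<union> Y \<subseteq> span (A \<union> B)"
    using A(1) B(1) span_mono[of A "A \<union> B"] span_mono[of B "A \<union> B"] by blast
  then have "dim (X \<union> Y) \<le> card (A \<union> B)"
    using dim_le_card A(3) B(3) by blast
  also have "\<dots> \<le> card A + card B" by (rule card_Un_le)
  finally show ?thesis using A B by simp
qed

lemma dim_image_eq_inj_on_span: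
  assumes f: "module_hom scale scale f" and inj: "inj_on f (span S)"
  shows "dim (f ` S) = dim S"
proof -
  interpret f: module_hom scale scale f by fact
  obtain B where B: "B \<subseteq> S" "independent B" "S \<subseteq> span B" "card B = dim S"
    using basis_exists[of S] by auto
  then have span_B: "span S = span B"
    using span_mono[of B S] span_mono[of S "span B"] span_span[of B] by auto
  have "card (f ` B) = card B"
    using card_image inj_on_subset[OF inj] B(1) span_superset by blast
  moreover have "independent (f ` B)"
  proof
    assume "dependent (f ` B)"
    from f.dependent_inj_imageD[OF this] inj span_B B(2) show False by simp
  qed
  moreover have "span (f ` S) = span (f ` B)"
    using f.span_image span_B by simp
  ultimately show ?thesis
    using B(4) by (metis dim_eq_card_independent dim_span)
qed

lemma span_disjoint_subsets_inter:
  assumes B: "independent B" and sub: "R \<subseteq> B" "S \<subseteq> B" and disj: "R \<inter> S = {}"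
    and x: "x \<in> span R" "x \<in> span S"
  shows "x = 0"
proof -
  have rep: "representation B x = representation T x" if "T \<subseteq> B" "x \<in> span T" for T
  proof (rule representation_eqI[OF B])
    have T: "independent T" using B that(1) independent_mono by blast
    show "x \<in> span B" using that span_mono by blast
    show "representation T x b \<noteq> 0 \<Longrightarrow> b \<in> B" for b
      using representation_ne_zero that(1) by blast
    show "finite {b. representation T x b \<noteq> 0}" by (rule finite_representation)
    show "(\<Sum>b | representation T x b \<noteq> 0. representation T x b *s b) = x"
      using sum_nonzero_representation_eq[OF T that(2)] .
  qed
  have "representation R x b = 0" for b
    using rep[OF sub(1) x(1)] rep[OF sub(2) x(2)] representation_ne_zero[of R x b]
      representation_ne_zero[of S x b] disj by (metis disjoint_iff)
  then show ?thesis
    using sum_nonzero_representation_eq[OF independent_mono[OF B sub(1)] x(1)] by simp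
qed

text \<open>Unlike the library's rank--nullity theorem, the ambient space need not be
  finite-dimensional.\<close>

lemma rank_nullity_finite_span:
  assumes f: "module_hom scale scale f" and D: "subspace D" "D \<subseteq> span E" and E: "finite E"
  shows "dim D = dim (f ` D) + dim {x\<in>D. f x = 0}"
proof -
  interpret f: module_hom scale scale f by fact
  define K where "K = {x\<in>D. f x = 0}"
  obtain BK where BK: "BK \<subseteq> K" "independent BK" "K \<subseteq> span BK" "card BK = dim K"
    using basis_exists[of K] by auto
  obtain B where B: "BK \<subseteq> B" "B \<subseteq> D" "independent B" "D \<subseteq> span B"
    using maximal_independent_subset_extend[OF _ BK(2), of D] BK(1) unfolding K_def by auto
  have fin_B: "finite B" using independent_span_bound[OF E B(3)] B(2) D(2) by blast
  define R where "R = B - BK"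
  have R: "finite R" "independent R" using fin_B B(3) R_def independent_mono by auto
  have span_R: "span R \<subseteq> D" using span_minimal[of R D] R_def B(2) D(1) by blast
  have inj: "inj_on f (span R)"
  proof (rule inj_onI)
    fix x y assume xy: "x \<in> span R" "y \<in> span R" "f x = f y"
    then have "x - y \<in> span R" "f (x - y) = 0" using span_diff f.diff by auto
    then have "x - y \<in> span BK" using span_R BK(3) K_def by blast
    moreover have "R \<subseteq> B" "R \<inter> BK = {}" using R_def by auto
    ultimately have "x - y = 0"
      using span_disjoint_subsets_inter[OF B(3) _ B(1)] \<open>x - y \<in> span R\<close> by metis
    then show "x = y" by simp
  qed
  have "span B = D" using B(2,4) span_minimal[OF B(2) D(1)] by blast
  then have "f ` D = span (f ` B)" using f.span_image by metis
  also have "span (f ` B) = span (f ` R)"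
  proof (rule subset_antisym)
    have "f ` B \<subseteq> insert 0 (f ` R)" using BK(1) R_def K_def by auto
    then have "span (f ` B) \<subseteq> span (insert 0 (f ` R))" by (rule span_mono)
    then show "span (f ` B) \<subseteq> span (f ` R)" by simp
    show "span (f ` R) \<subseteq> span (f ` B)" using R_def by (intro span_mono) auto
  qed
  finally have "dim (f ` D) = dim (f ` R)" using dim_span by metis
  also have "\<dots> = dim R" using dim_image_eq_inj_on_span[OF f inj] .
  finally have "dim (f ` D) = dim R" .
  moreover have "card B = card R + card BK"
    using R_def B(1) fin_B card_Diff_subset[of BK B] card_mono[OF fin_B B(1)]
    by (simp add: finite_subset)
  ultimately show ?thesis
    using basis_card_eq_dim[OF B(2,4,3)] dim_eq_card_independent[OF R(2)] BK(4) K_def by simp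
qed

end

section \<open>Punctured and shortened dimensions\<close>

definition unit_word :: "nat \<Rightarrow> nat \<Rightarrow> 'a::{zero,one}" where
  "unit_word j = (\<lambda>i. if i = j then 1 else 0)"

definition words :: "nat \<Rightarrow> (nat \<Rightarrow> 'a::zero) set" where
  "words n = {c. \<forall>j\<ge>n. c j = 0}"

lemma sum_fun_apply: "(sum f A) j = (\<Sum>a\<in>A. f a j)"
  for f :: "'b \<Rightarrow> nat \<Rightarrow> 'a::comm_monoid_add"
  by (induction A rule: infinite_finite_induct) auto

lemma in_span_unit_words:
  fixes c :: "nat \<Rightarrow> 'a::field"
  assumes "\<forall>j. j \<notin> S \<longrightarrow> c j = 0" "finite S"
  shows "c \<in> W.span (unit_word ` S)"
proof -
  have "c = (\<Sum>j\<in>S. wscale (c j) (unit_word j))"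
  proof
    fix i
    have "(\<Sum>j\<in>S. wscale (c j) (unit_word j)) i = (\<Sum>j\<in>S. c j * unit_word j i)"
      by (simp add: sum_fun_apply wscale_def)
    also have "\<dots> = (\<Sum>j\<in>S. if j = i then c i else 0)"
      by (rule sum.cong) (auto simp: unit_word_def)
    finally show "c i = (\<Sum>j\<in>S. wscale (c j) (unit_word j)) i"
      using assms by (simp add: sum.delta)
  qed
  also have "\<dots> \<in> W.span (unit_word ` S)"
    by (intro W.span_sum W.span_scale W.span_base) auto
  finally show ?thesis .
qed

lemma words_subset_span: "words n \<subseteq> W.span (unit_word ` {..<n} :: (nat \<Rightarrow> 'a::field) set)"
  using in_span_unit_words[of "{..<n}"] by (auto simp: words_def not_less)

lemma subspace_words: "W.subspace (words n :: (nat \<Rightarrow> 'a::field) set)"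
  unfolding W.subspace_def words_def by (auto simp: wscale_def)

lemma linear_code_iff: "linear_code n C \<longleftrightarrow> W.subspace C \<and> C \<subseteq> words n"
  by (auto simp: linear_code_def words_def)

lemma dim_image_eq_inj_on_words:
  fixes f :: "(nat \<Rightarrow> 'a::field) \<Rightarrow> (nat \<Rightarrow> 'a)"
  assumes "module_hom wscale wscale f" "inj_on f (words n)" "X \<subseteq> words n"
  shows "W.dim (f ` X) = W.dim X"
proof (rule W.dim_image_eq_inj_on_span[OF assms(1)])
  show "inj_on f (W.span X)"
    using assms(2) W.span_minimal[OF assms(3) subspace_words] by (rule inj_on_subset)
qed

definition wrestrict :: "nat set \<Rightarrow> (nat \<Rightarrow> 'a::zero) \<Rightarrow> nat \<Rightarrow> 'a" where
  "wrestrict S c = (\<lambda>j. if j \<in> S then c j else 0)"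

definition shortened :: "(nat \<Rightarrow> 'a::zero) set \<Rightarrow> nat set \<Rightarrow> (nat \<Rightarrow> 'a) set" where
  "shortened D S = {c\<in>D. \<forall>j. j \<notin> S \<longrightarrow> c j = 0}"

definition punct_dim_on :: "(nat \<Rightarrow> 'a::field) set \<Rightarrow> nat set \<Rightarrow> nat" where
  "punct_dim_on D S = wdim (wrestrict S ` D)"

definition short_dim_on :: "(nat \<Rightarrow> 'a::field) set \<Rightarrow> nat set \<Rightarrow> nat" where
  "short_dim_on D S = wdim (shortened D S)"

lemma linear_wrestrict: "module_hom (wscale :: 'a::field \<Rightarrow> _) wscale (wrestrict S)"
  unfolding module_hom_iff using W.module_axioms by (auto simp: wrestrict_def wscale_def)

lemma wrestrict_image_subset_words: "D \<subseteq> words n \<Longrightarrow> wrestrict S ` D \<subseteq> words n"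
  by (auto simp: words_def wrestrict_def)

lemma linear_code_shortened: "linear_code n D \<Longrightarrow> linear_code n (shortened D S)"
  unfolding linear_code_iff W.subspace_def shortened_def by (auto simp: wscale_def)

lemma punct_dim_on_le_card:
  assumes "finite S"
  shows "punct_dim_on D S \<le> card S"
proof -
  have "wrestrict S ` D \<subseteq> W.span (unit_word ` S)"
    by (intro image_subsetI in_span_unit_words[OF _ assms]) (simp add: wrestrict_def)
  then have "punct_dim_on D S \<le> card (unit_word ` S :: (nat \<Rightarrow> 'a) set)"
    unfolding punct_dim_on_def wdim_def using W.dim_le_card assms by blast
  also have "\<dots> \<le> card S" by (rule card_image_le[OF assms])
  finally show ?thesis .
qed

lemma punct_dim_on_Un_le:
  assumes "linear_code n D" "S \<inter> T = {}"
  shows "punct_dim_on D (S \<union> T) \<le> punct_dim_on D S + punct_dim_on D T"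
proof -
  have D: "D \<subseteq> words n" using assms(1) linear_code_iff by blast
  have "wrestrict (S \<union> T) c = wrestrict S c + wrestrict T c" for c :: "nat \<Rightarrow> 'a"
    using assms(2) by (auto simp: wrestrict_def fun_eq_iff)
  then have "wrestrict (S \<union> T) ` D \<subseteq> W.span (wrestrict S ` D \<union> wrestrict T ` D)"
    by (simp add: image_subset_iff W.span_add W.span_base)
  moreover have "wrestrict S ` D \<union> wrestrict T ` D \<subseteq> W.span (unit_word ` {..<n})"
    using wrestrict_image_subset_words[OF D] words_subset_span by blast
  ultimately have "punct_dim_on D (S \<union> T) \<le> W.dim (wrestrict S ` D \<union> wrestrict T ` D)"
    unfolding punct_dim_on_def wdim_def by (intro W.dim_mono_finite_span) auto
  also have "\<dots> \<le> punct_dim_on D S + punct_dim_on D T"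
    unfolding punct_dim_on_def wdim_def
    using wrestrict_image_subset_words[OF D] words_subset_span
    by (intro W.dim_Un_le_finite_span) auto
  finally show ?thesis .
qed

lemma rank_nullity_wrestrict:
  assumes "linear_code n D"
  shows "wdim D = punct_dim_on D S + short_dim_on D ({..<n} - S)"
proof -
  have "{c\<in>D. wrestrict S c = 0} = shortened D ({..<n} - S)"
    using assms unfolding linear_code_iff words_def shortened_def wrestrict_def fun_eq_iff
    by (auto simp: not_less)
  moreover have "W.dim D = W.dim (wrestrict S ` D) + W.dim {c\<in>D. wrestrict S c = 0}"
    using assms words_subset_span unfolding linear_code_iff
    by (intro W.rank_nullity_finite_span[OF linear_wrestrict]) auto
  ultimately show ?thesis unfolding punct_dim_on_def short_dim_on_def wdim_def by simp
qed

lemma short_dim_on_Un_ge: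
  assumes "linear_code n D" "S \<inter> T = {}"
  shows "short_dim_on D S + short_dim_on D T \<le> short_dim_on D (S \<union> T)"
proof -
  define D' where "D' = shortened D (S \<union> T)"
  have D': "linear_code n D'" "D' \<subseteq> words n"
    using linear_code_shortened[OF assms(1)] linear_code_iff D'_def by auto
  have "shortened D S \<subseteq> wrestrict S ` D'"
  proof
    fix c assume c: "c \<in> shortened D S"
    then have "c = wrestrict S c" "c \<in> D'"
      by (auto simp: shortened_def D'_def wrestrict_def fun_eq_iff)
    then show "c \<in> wrestrict S ` D'" by blast
  qed
  then have "short_dim_on D S \<le> punct_dim_on D' S"
    unfolding short_dim_on_def punct_dim_on_def wdim_def
    using wrestrict_image_subset_words[OF D'(2)] words_subset_span[of n]
    by (intro W.dim_mono_finite_span[where E = "unit_word ` {..<n}"]) (auto intro: W.span_base)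
  moreover have "shortened D' ({..<n} - S) = shortened D T"
    using assms unfolding linear_code_def by (auto simp: D'_def shortened_def not_less)
  ultimately show ?thesis
    using rank_nullity_wrestrict[OF D'(1), of S] D'_def by (simp add: short_dim_on_def)
qed

lemma wdim_zero: "wdim {0 :: nat \<Rightarrow> 'a::field} = 0"
  using W.dim_le_card[of "{0}" "{}"] by (simp add: wdim_def W.span_zero)

lemma punct_dim_on_empty: "linear_code n D \<Longrightarrow> punct_dim_on D {} = 0"
proof -
  assume "linear_code n D"
  then have "0 \<in> D" using W.subspace_0 by (auto simp: linear_code_def)
  moreover have "wrestrict {} c = 0" for c :: "nat \<Rightarrow> 'a"
    by (simp add: wrestrict_def fun_eq_iff)
  ultimately have "wrestrict {} ` D = {0}" by (auto intro: rev_image_eqI)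
  then show ?thesis by (simp add: punct_dim_on_def wdim_zero)
qed

lemma short_dim_on_empty: "linear_code n D \<Longrightarrow> short_dim_on D {} = 0"
proof -
  assume "linear_code n D"
  then have "shortened D {} = {0}"
    using W.subspace_0 by (auto simp: linear_code_def shortened_def fun_eq_iff)
  then show ?thesis by (simp add: short_dim_on_def wdim_zero)
qed

section \<open>Permuting coordinates\<close>

definition permute_word :: "nat \<Rightarrow> nat list \<Rightarrow> (nat \<Rightarrow> 'a::zero) \<Rightarrow> nat \<Rightarrow> 'a" where
  "permute_word n g c = (\<lambda>i. if i < n then c (g ! i) else 0)"

lemma permute_code_eq_image: "permute_code n g C = permute_word n g ` C"
  by (simp add: permute_code_def permute_word_def)

lemma linear_permute_word: "module_hom (wscale :: 'a::field \<Rightarrow> _) wscale (permute_word n g)"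
  unfolding module_hom_iff using W.module_axioms by (auto simp: permute_word_def wscale_def)

locale coordinate_permutation =
  fixes n :: nat and g :: "nat list"
  assumes distinct: "distinct g" and set_eq: "set g = {..<n}"
begin

lemma length_eq: "length g = n"
  using distinct_card[OF distinct] set_eq by simp

lemma nth_surj: "j < n \<Longrightarrow> \<exists>i<n. g ! i = j"
  using set_eq length_eq by (metis in_set_conv_nth lessThan_iff)

lemma nth_in_image_iff: "I \<subseteq> {..<n} \<Longrightarrow> i < n \<Longrightarrow> g ! i \<in> (!) g ` I \<longleftrightarrow> i \<in> I"
  using nth_eq_iff_index_eq[OF distinct] length_eq by blast

lemma inj_on_permute_word: "inj_on (permute_word n g) (words n)"
proof (rule inj_onI)
  fix c d assume c: "c \<in> words n" and d: "d \<in> words n"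
    and eq: "permute_word n g c = permute_word n g d"
  show "c = d"
  proof
    fix j show "c j = d j"
    proof (cases "j < n")
      case True
      then obtain i where "i < n" "g ! i = j" using nth_surj by blast
      then show ?thesis using fun_cong[OF eq, of i] by (simp add: permute_word_def)
    next
      case False
      then show ?thesis using c d by (simp add: words_def)
    qed
  qed
qed

lemma permute_word_words: "permute_word n g c \<in> words n"
  by (simp add: permute_word_def words_def)

lemma linear_code_permute_code: "linear_code n C \<Longrightarrow> linear_code n (permute_code n g C)"
  unfolding linear_code_iff permute_code_eq_image
  using module_hom.subspace_image[OF linear_permute_word] permute_word_words by blast

lemma wdim_permute_code: "linear_code n C \<Longrightarrow> wdim (permute_code n g C) = wdim C"
  unfolding permute_code_eq_image wdim_def linear_code_iff
  using dim_image_eq_inj_on_words[OF linear_permute_word inj_on_permute_word] by blast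

lemma punct_dim_on_permute_code:
  assumes C: "linear_code n C" and I: "I \<subseteq> {..<n}"
  shows "punct_dim_on (permute_code n g C) I = punct_dim_on C ((!) g ` I)"
proof -
  have "wrestrict I (permute_word n g c) = permute_word n g (wrestrict ((!) g ` I) c)" for c :: "nat \<Rightarrow> 'a"
    using nth_in_image_iff[OF I] I by (auto simp: wrestrict_def permute_word_def fun_eq_iff)
  then have "wrestrict I ` permute_code n g C = permute_word n g ` wrestrict ((!) g ` I) ` C"
    unfolding permute_code_eq_image image_comp by (simp add: comp_def)
  moreover have "wrestrict ((!) g ` I) ` C \<subseteq> words n"
    using C wrestrict_image_subset_words linear_code_iff by blast
  ultimately show ?thesis
    unfolding punct_dim_on_def wdim_def
    using dim_image_eq_inj_on_words[OF linear_permute_word inj_on_permute_word] by metis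
qed

lemma short_dim_on_permute_code:
  assumes C: "linear_code n C" and I: "I \<subseteq> {..<n}"
  shows "short_dim_on (permute_code n g C) I = short_dim_on C ((!) g ` I)"
proof -
  have vanish_iff: "(\<forall>i. i \<notin> I \<longrightarrow> permute_word n g c i = 0) \<longleftrightarrow> (\<forall>j. j \<notin> (!) g ` I \<longrightarrow> c j = 0)"
    if "c \<in> words n" for c :: "nat \<Rightarrow> 'a"
  proof
    assume vanish: "\<forall>i. i \<notin> I \<longrightarrow> permute_word n g c i = 0"
    show "\<forall>j. j \<notin> (!) g ` I \<longrightarrow> c j = 0"
    proof (intro allI impI)
      fix j assume j: "j \<notin> (!) g ` I"
      show "c j = 0"
      proof (cases "j < n")
        case True
        then obtain i where "i < n" "g ! i = j" using nth_surj by blast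
        then show ?thesis using vanish j by (auto simp: permute_word_def)
      next
        case False
        then show ?thesis using that by (simp add: words_def)
      qed
    qed
  next
    assume "\<forall>j. j \<notin> (!) g ` I \<longrightarrow> c j = 0"
    then show "\<forall>i. i \<notin> I \<longrightarrow> permute_word n g c i = 0"
      using nth_in_image_iff[OF I] by (simp add: permute_word_def)
  qed
  have "C \<subseteq> words n" using C linear_code_iff by blast
  then have "shortened (permute_code n g C) I = permute_word n g ` shortened C ((!) g ` I)"
    unfolding shortened_def permute_code_eq_image using vanish_iff by blast
  moreover have "shortened C ((!) g ` I) \<subseteq> words n"
    using \<open>C \<subseteq> words n\<close> by (auto simp: shortened_def)
  ultimately show ?thesis
    unfolding short_dim_on_def wdim_def
    using dim_image_eq_inj_on_words[OF linear_permute_word inj_on_permute_word] by metis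
qed

end

section \<open>Cyclic codes and support sets\<close>

definition rotate_set :: "nat \<Rightarrow> nat \<Rightarrow> nat set \<Rightarrow> nat set" where
  "rotate_set n k S = (\<lambda>j. (j + k) mod n) ` S"

lemma Suc_mod_eq_iff:
  fixes s j n :: nat
  assumes "s < n" "j < n"
  shows "Suc s mod n = j \<longleftrightarrow> s = (j + n - 1) mod n"
proof -
  have pred: "(j + n - 1) mod n = (if j = 0 then n - 1 else j - 1)"
  proof (cases "j = 0")
    case False
    then have "j + n - 1 = (j - 1) + n" by simp
    then have "(j + n - 1) mod n = (j - 1) mod n" by simp
    then show ?thesis using False assms(2) by simp
  qed (use assms in simp)
  show ?thesis
  proof (cases "Suc s = n")
    case False
    then show ?thesis using pred assms by auto
  qed (use pred assms in auto)
qed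

lemma mem_rotate_set_1_iff:
  assumes "S \<subseteq> {..<n}" "j < n"
  shows "j \<in> rotate_set n 1 S \<longleftrightarrow> (j + n - 1) mod n \<in> S"
proof
  assume "j \<in> rotate_set n 1 S"
  then obtain s where "s \<in> S" "Suc s mod n = j" unfolding rotate_set_def by auto
  moreover from this have "s = (j + n - 1) mod n"
    using Suc_mod_eq_iff[of s n j] assms by blast
  ultimately show "(j + n - 1) mod n \<in> S" by simp
next
  assume pred: "(j + n - 1) mod n \<in> S"
  have "Suc ((j + n - 1) mod n) mod n = j"
    using Suc_mod_eq_iff[of "(j + n - 1) mod n" n j] assms by simp
  then show "j \<in> rotate_set n 1 S" unfolding rotate_set_def using pred
    by (auto intro: rev_image_eqI)
qed

lemma linear_cshift: "module_hom (wscale :: 'a::field \<Rightarrow> _) wscale (cshift n)"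
  unfolding module_hom_iff using W.module_axioms by (auto simp: cshift_def wscale_def)

lemma inj_on_cshift:
  assumes "0 < n"
  shows "inj_on (cshift n) (words n)"
proof (rule inj_onI)
  fix c d assume c: "c \<in> words n" and d: "d \<in> words n" and eq: "cshift n c = cshift n d"
  show "c = d"
  proof
    fix j show "c j = d j"
    proof (cases "j < n")
      case True
      then have "j = (Suc j mod n + n - 1) mod n"
        using Suc_mod_eq_iff[OF True, of "Suc j mod n"] assms by simp
      then show ?thesis
        using fun_cong[OF eq, of "Suc j mod n"] assms by (simp add: cshift_def)
    next
      case False
      then show ?thesis using c d by (simp add: words_def)
    qed
  qed
qed

lemma wrestrict_cshift:
  assumes "S \<subseteq> {..<n}"
  shows "wrestrict (rotate_set n 1 S) (cshift n c) = cshift n (wrestrict S c)"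
proof
  fix j
  have "j \<notin> rotate_set n 1 S" if "\<not> j < n"
    using that assms by (cases "n = 0") (auto simp: rotate_set_def)
  then show "wrestrict (rotate_set n 1 S) (cshift n c) j = cshift n (wrestrict S c) j"
    using mem_rotate_set_1_iff[OF assms] by (auto simp: wrestrict_def cshift_def)
qed

lemma cshift_mem_shortened:
  assumes "cyclic_code n C" "S \<subseteq> {..<n}" "c \<in> shortened C S"
  shows "cshift n c \<in> shortened C (rotate_set n 1 S)"
  using assms mem_rotate_set_1_iff[OF assms(2)]
  by (auto simp: shortened_def cyclic_code_def cshift_def)

lemma punct_dim_on_le_rotate_set:
  assumes C: "cyclic_code n C" and n: "0 < n" and S: "S \<subseteq> {..<n}"
  shows "punct_dim_on C S \<le> punct_dim_on C (rotate_set n 1 S)"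
proof -
  have CW: "C \<subseteq> words n" using C by (simp add: cyclic_code_def linear_code_iff)
  have "W.dim (wrestrict S ` C) = W.dim (cshift n ` wrestrict S ` C)"
    using dim_image_eq_inj_on_words[OF linear_cshift inj_on_cshift[OF n]
        wrestrict_image_subset_words[OF CW]] by simp
  also have "\<dots> \<le> W.dim (wrestrict (rotate_set n 1 S) ` C)"
  proof (rule W.dim_mono_finite_span)
    have "cshift n (wrestrict S c) \<in> wrestrict (rotate_set n 1 S) ` C" if "c \<in> C" for c
      unfolding wrestrict_cshift[OF S, symmetric]
      using C that by (intro imageI) (simp add: cyclic_code_def)
    then show "cshift n ` wrestrict S ` C \<subseteq> W.span (wrestrict (rotate_set n 1 S) ` C)"
      by (auto intro: W.span_base)
    show "wrestrict (rotate_set n 1 S) ` C \<subseteq> W.span (unit_word ` {..<n})"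
      using wrestrict_image_subset_words[OF CW] words_subset_span by blast
  qed simp
  finally show ?thesis unfolding punct_dim_on_def wdim_def .
qed

lemma short_dim_on_le_rotate_set:
  assumes C: "cyclic_code n C" and n: "0 < n" and S: "S \<subseteq> {..<n}"
  shows "short_dim_on C S \<le> short_dim_on C (rotate_set n 1 S)"
proof -
  have CW: "shortened C T \<subseteq> words n" for T
    using C by (auto simp: cyclic_code_def linear_code_iff shortened_def)
  have "W.dim (shortened C S) = W.dim (cshift n ` shortened C S)"
    using dim_image_eq_inj_on_words[OF linear_cshift inj_on_cshift[OF n] CW] by simp
  also have "\<dots> \<le> W.dim (shortened C (rotate_set n 1 S))"
  proof (rule W.dim_mono_finite_span)
    show "cshift n ` shortened C S \<subseteq> W.span (shortened C (rotate_set n 1 S))"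
      using cshift_mem_shortened[OF C S] by (auto intro: W.span_base)
    show "shortened C (rotate_set n 1 S) \<subseteq> W.span (unit_word ` {..<n})"
      using CW words_subset_span by blast
  qed simp
  finally show ?thesis unfolding short_dim_on_def wdim_def .
qed

definition support_set :: "nat \<Rightarrow> nat \<Rightarrow> nat \<Rightarrow> nat set" where
  "support_set n m a = {j. j < n \<and> j mod m = a}"

lemma support_set_subset: "support_set n m a \<subseteq> {..<n}"
  by (auto simp: support_set_def)

lemma add_mult_less_mult: "b < m \<Longrightarrow> s < r \<Longrightarrow> b + m * s < m * r"
  for b m s r :: nat
  using mult_le_mono2[of "Suc s" r m] by simp

lemma support_set_mult_eq_image:
  assumes "0 < m" "a < m"
  shows "support_set (m * r) m a = (\<lambda>s. a + m * s) ` {..<r}"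
proof
  show "support_set (m * r) m a \<subseteq> (\<lambda>s. a + m * s) ` {..<r}"
  proof
    fix j assume j: "j \<in> support_set (m * r) m a"
    then have "j = a + m * (j div m)"
      using mod_mult_div_eq[of j m] by (simp add: support_set_def)
    moreover have "j div m < r"
      using j assms by (simp add: support_set_def less_mult_imp_div_less mult.commute)
    ultimately show "j \<in> (\<lambda>s. a + m * s) ` {..<r}" by blast
  qed
  show "(\<lambda>s. a + m * s) ` {..<r} \<subseteq> support_set (m * r) m a"
    using assms add_mult_less_mult by (auto simp: support_set_def)
qed

lemma card_support_set:
  assumes "0 < m" "a < m"
  shows "card (support_set (m * r) m a) = r"
proof -
  have "inj_on (\<lambda>s. a + m * s) {..<r}" using assms by (auto simp: inj_on_def)
  then show ?thesis using support_set_mult_eq_image[OF assms] card_image by fastforce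
qed

lemma add_mod_eq_add_mod_iff: "(j + k) mod n = (j' + k) mod n \<longleftrightarrow> j mod n = j' mod n"
  for j j' k n :: nat
  by (simp add: nat_mod_eq_iff)

lemma rotate_set_support_set:
  assumes "m dvd n" "0 < m" "a < m"
  shows "rotate_set n k (support_set n m a) = support_set n m ((a + k) mod m)"
proof (rule card_subset_eq)
  show "finite (support_set n m ((a + k) mod m))" by (simp add: support_set_def)
  show "rotate_set n k (support_set n m a) \<subseteq> support_set n m ((a + k) mod m)"
  proof
    fix y assume "y \<in> rotate_set n k (support_set n m a)"
    then obtain j where j: "j < n" "j mod m = a" "y = (j + k) mod n"
      unfolding rotate_set_def support_set_def by blast
    then have "y mod m = (a + k) mod m"
      using mod_mod_cancel[OF assms(1)] mod_add_left_eq[of j m k] by simp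
    moreover have "y < n" using j(1,3) by simp
    ultimately show "y \<in> support_set n m ((a + k) mod m)" by (simp add: support_set_def)
  qed
  obtain r where n: "n = m * r" using assms(1) by blast
  have "inj_on (\<lambda>j. (j + k) mod n) (support_set n m a)"
    by (rule inj_onI) (auto simp: support_set_def add_mod_eq_add_mod_iff)
  then have "card (rotate_set n k (support_set n m a)) = card (support_set n m a)"
    unfolding rotate_set_def by (rule card_image)
  then show "card (rotate_set n k (support_set n m a)) = card (support_set n m ((a + k) mod m))"
    using card_support_set assms(2,3) n by simp
qed

text \<open>Rotating by \<open>k\<close> maps the support set of residue \<open>a\<close> to that of residue \<open>a + k\<close>;
  going once around the cycle closes the chain of inequalities.\<close>

lemma support_set_rotation_invariant:
  fixes \<Phi> :: "nat set \<Rightarrow> 'b::order"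
  assumes mono: "\<And>S. S \<subseteq> {..<n} \<Longrightarrow> \<Phi> S \<le> \<Phi> (rotate_set n 1 S)"
    and "0 < n" "m dvd n" "0 < m" "a < m"
  shows "\<Phi> (support_set n m a) = \<Phi> (support_set n m 0)"
proof -
  have iter: "\<Phi> S \<le> \<Phi> (rotate_set n k S)" if "S \<subseteq> {..<n}" for S k
  proof (induction k)
    case 0
    have "rotate_set n 0 S = S" using that by (force simp: rotate_set_def image_iff)
    then show ?case by simp
  next
    case (Suc k)
    have "rotate_set n k S \<subseteq> {..<n}" using \<open>0 < n\<close> by (auto simp: rotate_set_def)
    moreover have "rotate_set n 1 (rotate_set n k S) = rotate_set n (Suc k) S"
      unfolding rotate_set_def image_comp by (auto simp: comp_def mod_Suc_eq)
    ultimately show ?case using Suc.IH mono order.trans by metis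
  qed
  have "\<Phi> (support_set n m 0) \<le> \<Phi> (support_set n m a)"
    using iter[OF support_set_subset, of m 0 a] rotate_set_support_set assms(3-5) by simp
  moreover have "\<Phi> (support_set n m a) \<le> \<Phi> (support_set n m 0)"
    using iter[OF support_set_subset, of m a "m - a"] rotate_set_support_set assms(3-5) by simp
  ultimately show ?thesis by simp
qed

section \<open>The ordering gamma\<close>

lemma filter_mod_eq_upt:
  assumes "0 < m" "b < m"
  shows "filter (\<lambda>a. a mod m = b) [0..<m * r] = map (\<lambda>s. b + m * s) [0..<r]"
proof (rule sorted_distinct_set_unique)
  show "sorted (filter (\<lambda>a. a mod m = b) [0..<m * r])" by (rule sorted_wrt_filter) simp
  show "distinct (filter (\<lambda>a. a mod m = b) [0..<m * r])" by simp
  show "sorted (map (\<lambda>s. b + m * s) [0..<r])" by (simp add: sorted_iff_nth_mono)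
  show "distinct (map (\<lambda>s. b + m * s) [0..<r])"
    using assms by (simp add: distinct_map inj_on_def)
  have "set (filter (\<lambda>a. a mod m = b) [0..<m * r]) = support_set (m * r) m b"
    by (auto simp: support_set_def)
  then show "set (filter (\<lambda>a. a mod m = b) [0..<m * r]) = set (map (\<lambda>s. b + m * s) [0..<r])"
    using support_set_mult_eq_image[OF assms] by (simp add: atLeast0LessThan)
qed

lemma take_drop_concat_uniform:
  assumes "\<forall>x\<in>set L. length x = z" "q < length L" "v + u \<le> z"
  shows "take u (drop (z * q + v) (concat L)) = take u (drop v (L ! q))"
  using assms
proof (induction L arbitrary: q)
  case (Cons x L)
  then show ?case by (cases q) simp_all
qed simp

lemma take_drop_concat_aligned:
  assumes len: "\<forall>w\<in>set Ws. length w = z" and u: "u dvd z" "0 < u"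
    and t: "u * (t + 1) \<le> z * length Ws"
  obtains q p where "q < length Ws" "u * (p + 1) \<le> z"
    "take u (drop (u * t) (concat Ws)) = take u (drop (u * p) (Ws ! q))"
proof -
  define d where "d = z div u"
  have z: "z = d * u" using u(1) by (simp add: d_def)
  define q where "q = t div d"
  define p where "p = t mod d"
  have "t = d * q + p" using mult_div_mod_eq[of d t] by (simp add: q_def p_def)
  then have ut: "u * t = z * q + u * p" using z by (simp add: algebra_simps)
  have "u * (t + 1) \<le> u * (d * length Ws)" using t z by (simp add: ac_simps)
  then have "t < d * length Ws" using u(2) by (metis Suc_eq_plus1 Suc_le_eq mult_le_cancel1)
  then have q: "q < length Ws" by (simp add: q_def less_mult_imp_div_less mult.commute)
  have "0 < d" using \<open>t < d * length Ws\<close> by (cases d) auto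
  then have "p < d" by (simp add: p_def)
  then have "u * (p + 1) \<le> u * d" by (intro mult_le_mono2) simp
  then have p: "u * p + u \<le> z" "u * (p + 1) \<le> z" using z by (simp_all add: algebra_simps)
  show ?thesis
    using that[OF q p(2)] take_drop_concat_uniform[OF len q p(1)] ut by simp
qed

lemma set_take_drop:
  assumes "k + u \<le> length xs"
  shows "set (take u (drop k xs)) = (!) xs ` {k..<k + u}"
proof
  show "set (take u (drop k xs)) \<subseteq> (!) xs ` {k..<k + u}"
  proof
    fix y assume "y \<in> set (take u (drop k xs))"
    then obtain i where "i < u" "y = take u (drop k xs) ! i"
      using assms by (auto simp: in_set_conv_nth)
    then show "y \<in> (!) xs ` {k..<k + u}" using assms by (auto intro: rev_image_eqI[of "k + i"])
  qed
  show "(!) xs ` {k..<k + u} \<subseteq> set (take u (drop k xs))"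
  proof
    fix y assume "y \<in> (!) xs ` {k..<k + u}"
    then obtain i where i: "k \<le> i" "i < k + u" "y = xs ! i" by auto
    then have "y = take u (drop k xs) ! (i - k)" using assms by simp
    moreover have "i - k < length (take u (drop k xs))" using assms i by simp
    ultimately show "y \<in> set (take u (drop k xs))" by (metis nth_mem)
  qed
qed

lemma support_set_eq_UN:
  assumes "0 < m" "b < m" "0 < r"
  shows "support_set n m b = (\<Union>s<r. support_set n (m * r) (b + m * s))"
proof
  have "j mod m = b" if "j mod (m * r) = b + m * s" for j s
  proof -
    have "j mod m = j mod (m * r) mod m" by (simp add: mod_mod_cancel)
    then show ?thesis using that assms by simp
  qed
  then show "(\<Union>s<r. support_set n (m * r) (b + m * s)) \<subseteq> support_set n m b"
    by (auto simp: support_set_def)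
  show "support_set n m b \<subseteq> (\<Union>s<r. support_set n (m * r) (b + m * s))"
  proof
    fix j assume j: "j \<in> support_set n m b"
    have "j mod (m * r) \<in> support_set (m * r) m b"
      using j assms by (simp add: support_set_def mod_mod_cancel)
    then obtain s where "s < r" "j mod (m * r) = b + m * s"
      using support_set_mult_eq_image[OF assms(1,2)] by auto
    then show "j \<in> (\<Union>s<r. support_set n (m * r) (b + m * s))"
      using j by (auto simp: support_set_def)
  qed
qed

lemma gam_dfs_Cons_eq:
  assumes "z dvd y" "0 < z" "y dvd n" "b < n div y"
  shows "gam_dfs n y b (z # zs) = concat (map (\<lambda>s. gam_dfs n z (b + n div y * s) zs) [0..<y div z])"
proof -
  have "n = z * (y div z * (n div y))"
    using assms(1,3) by (simp add: mult.assoc[symmetric])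
  then have "n div z = n div y * (y div z)"
    using assms(2) by (metis nonzero_mult_div_cancel_left mult.commute less_numeral_extra(3))
  then have "filter (\<lambda>a. a mod (n div y) = b) [0..<n div z] = map (\<lambda>s. b + n div y * s) [0..<y div z]"
    using filter_mod_eq_upt[of "n div y" b "y div z"] assms(4) by simp
  then show ?thesis by (simp add: comp_def)
qed

lemma gam_dfs_set_length:
  assumes "sorted_wrt (\<lambda>a b. b dvd a) (y # zs)" "0 < y" "y dvd n" "b < n div y"
  shows "set (gam_dfs n y b zs) = support_set n (n div y) b \<and> length (gam_dfs n y b zs) = y"
  using assms
proof (induction zs arbitrary: y b)
  case Nil
  have "set (gam_dfs n y b []) = support_set n (n div y) b"
    by (auto simp: support_set_def)
  moreover have "card (support_set n (n div y) b) = y"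
    using card_support_set[of "n div y" b y] Nil by simp
  ultimately show ?case using distinct_card[of "gam_dfs n y b []"] by simp
next
  case (Cons z zs)
  have z: "z dvd y" "0 < z" "sorted_wrt (\<lambda>a b. b dvd a) (z # zs)"
    using Cons.prems(1,2) by (auto intro: Nat.gr0I)
  define m where "m = n div y"
  define r where "r = y div z"
  define G where "G s = gam_dfs n z (b + m * s) zs" for s
  have y: "y = r * z" using z(1) by (simp add: r_def)
  have "n = y * m" using Cons.prems(3) by (simp add: m_def)
  then have "n = z * (r * m)" using y by (simp add: ac_simps)
  then have nz: "n div z = m * r" using z(2) by simp
  have m: "0 < m" "b < m" using Cons.prems(4) m_def by auto
  have r: "0 < r" using y Cons.prems(2) by (simp add: Nat.gr0I)
  have G: "set (G s) = support_set n (m * r) (b + m * s) \<and> length (G s) = z" if "s < r" for s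
    using Cons.IH[OF z(3,2) dvd_trans[OF z(1) Cons.prems(3)]] add_mult_less_mult[OF m(2) that] nz
    by (simp add: G_def)
  have dfs: "gam_dfs n y b (z # zs) = concat (map G [0..<r])"
    using gam_dfs_Cons_eq[OF z(1,2) Cons.prems(3,4)] by (simp add: G_def[abs_def] m_def r_def)
  have set_eq: "set (concat (map G [0..<r])) = support_set n m b"
    using G support_set_eq_UN[OF m r] by (auto simp: atLeast0LessThan)
  have "length (concat (map G [0..<r])) = sum_list (map (length \<circ> G) [0..<r])"
    by (simp add: length_concat)
  also have "map (length \<circ> G) [0..<r] = map (\<lambda>s. z) [0..<r]"
    using G by (intro map_cong) auto
  also have "sum_list \<dots> = y" using y by (simp add: sum_list_triv)
  finally show ?case using set_eq dfs m_def by simp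
qed

lemma gam_dfs_block:
  assumes "sorted_wrt (\<lambda>a b. b dvd a) (y # zs)" "0 < y" "y dvd n" "b < n div y"
    and "u \<in> set (y # zs)" "u * (t + 1) \<le> y"
  shows "\<exists>a < n div u. set (take u (drop (u * t) (gam_dfs n y b zs))) = support_set n (n div u) a"
  using assms
proof (induction zs arbitrary: y b t)
  case Nil
  then have "u = y" "t = 0" by (auto simp: Nat.gr0I)
  then show ?case using gam_dfs_set_length[OF Nil.prems(1-4)] Nil.prems(4) by auto
next
  case (Cons z zs)
  show ?case
  proof (cases "u = y")
    case True
    then have "t = 0" using Cons.prems(2,6) by (auto simp: Nat.gr0I)
    then show ?thesis
      using True gam_dfs_set_length[OF Cons.prems(1-4)] Cons.prems(4) by auto
  next
    case False
    have z: "z dvd y" "0 < z" "sorted_wrt (\<lambda>a b. b dvd a) (z # zs)"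
      using Cons.prems(1,2) by (auto intro: Nat.gr0I)
    have u_mem: "u \<in> set (z # zs)" using False Cons.prems(5) by simp
    then have "u dvd z" using Cons.prems(1) by auto
    then have u: "u \<in> set (z # zs)" "u dvd z" "0 < u" using u_mem z(2) dvd_pos_nat by blast+
    define m where "m = n div y"
    define r where "r = y div z"
    define G where "G s = gam_dfs n z (b + m * s) zs" for s
    have y: "y = r * z" using z(1) by (simp add: r_def)
    have "n = y * m" using Cons.prems(3) by (simp add: m_def)
    then have nz: "n div z = m * r" using y z(2) by (simp add: ac_simps)
    have child: "b + m * s < n div z" if "s < r" for s
      using add_mult_less_mult[OF _ that, of b m] Cons.prems(4) nz by (simp add: m_def)
    have z_n: "z dvd n" using dvd_trans[OF z(1) Cons.prems(3)] .
    have len: "\<forall>w\<in>set (map G [0..<r]). length w = z"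
      using gam_dfs_set_length[OF z(3,2) z_n] child by (auto simp: G_def)
    have "u * (t + 1) \<le> z * length (map G [0..<r])" using Cons.prems(6) y by (simp add: mult.commute)
    then obtain q p where q: "q < r" and p: "u * (p + 1) \<le> z"
      and "take u (drop (u * t) (concat (map G [0..<r]))) = take u (drop (u * p) (G q))"
      using take_drop_concat_aligned[OF len u(2,3)] by auto
    moreover have "gam_dfs n y b (z # zs) = concat (map G [0..<r])"
      using gam_dfs_Cons_eq[OF z(1,2) Cons.prems(3,4)] by (simp add: G_def[abs_def] m_def r_def)
    ultimately show ?thesis
      using Cons.IH[OF z(3,2) z_n child[OF q] u(1) p] by (simp add: G_def)
  qed
qed

section \<open>Cutting aligned blocks\<close>

lemma subadditive_UN_le:
  fixes F :: "'a set \<Rightarrow> 'b::ordered_comm_monoid_add"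
  assumes F0: "F {} = 0" and sub: "\<And>S T. S \<inter> T = {} \<Longrightarrow> F (S \<union> T) \<le> F S + F T"
    and "finite K" "disjoint_family_on X K"
  shows "F (\<Union>k\<in>K. X k) \<le> (\<Sum>k\<in>K. F (X k))"
  using assms(3,4)
proof (induction K rule: finite_induct)
  case (insert a K)
  then have disj: "X a \<inter> (\<Union>k\<in>K. X k) = {}" "disjoint_family_on X K"
    by (auto simp: disjoint_family_on_def)
  have "F (X a \<union> (\<Union>k\<in>K. X k)) \<le> F (X a) + F (\<Union>k\<in>K. X k)"
    using disj(1) by (rule sub)
  also have "\<dots> \<le> F (X a) + (\<Sum>k\<in>K. F (X k))"
    using insert.IH[OF disj(2)] by (rule add_left_mono)
  finally show ?case using insert.hyps by simp
qed (simp add: F0)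

lemma cut_subadditive:
  assumes sub: "\<And>S T. S \<inter> T = {} \<Longrightarrow> F (S \<union> T) \<le> (F S + F T :: 'b::ordered_ab_semigroup_add)"
    and "S \<inter> T = {}"
  shows "F ((S \<union> T) \<inter> A) + F ((S \<union> T) - A) \<le> (F (S \<inter> A) + F (S - A)) + (F (T \<inter> A) + F (T - A))"
proof -
  have "(S \<union> T) \<inter> A = (S \<inter> A) \<union> (T \<inter> A)" "(S \<inter> A) \<inter> (T \<inter> A) = {}"
    using assms(2) by auto
  then have inside: "F ((S \<union> T) \<inter> A) \<le> F (S \<inter> A) + F (T \<inter> A)"
    using sub by metis
  have "(S \<union> T) - A = (S - A) \<union> (T - A)" "(S - A) \<inter> (T - A) = {}"
    using assms(2) by auto
  then have outside: "F ((S \<union> T) - A) \<le> F (S - A) + F (T - A)"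
    using sub by metis
  show ?thesis using add_mono[OF inside outside] by (simp add: ac_simps)
qed

lemma sum_le_except_one:
  fixes f :: "'a \<Rightarrow> int"
  assumes "finite K" "K \<noteq> {}" "\<And>k. k \<in> K \<Longrightarrow> f k \<le> b" "\<And>k. k \<in> K \<Longrightarrow> k \<noteq> k0 \<Longrightarrow> f k = c"
  shows "sum f K \<le> b + (int (card K) - 1) * c"
proof (cases "k0 \<in> K")
  case True
  have "sum f K = f k0 + (\<Sum>k\<in>K - {k0}. c)"
    using assms(1,4) True by (simp add: sum.remove)
  moreover have "1 \<le> card K" using assms(1,2) by (simp add: Suc_le_eq card_gt_0_iff)
  ultimately show ?thesis using assms(1,3) True by (simp add: of_nat_diff)
next
  case False
  obtain k where "k \<in> K" using assms(2) by blast
  then have "c \<le> b" using assms(3,4) False by force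
  moreover have "sum f K = (\<Sum>k\<in>K. c)" using assms(4) False by (intro sum.cong) auto
  ultimately show ?thesis by (simp add: algebra_simps)
qed

lemma mem_blocks_iff: "0 < u \<Longrightarrow> y \<in> {u * a..<u * b} \<longleftrightarrow> y div u \<in> {a..<b}"
  for u y a b :: nat
  by (simp add: less_eq_div_iff_mult_less_eq div_less_iff_less_mult mult.commute)

lemma mem_block_iff: "0 < u \<Longrightarrow> y \<in> {u * k..<u * (k + 1)} \<longleftrightarrow> y div u = k"
  for u y k :: nat
  unfolding mem_blocks_iff by auto

lemma block_eq_UN_blocks:
  fixes u m t :: nat
  assumes "0 < u"
  shows "{u * m * t..<u * m * (t + 1)} = (\<Union>k\<in>{m * t..<m * (t + 1)}. {u * k..<u * (k + 1)})"
proof (rule set_eqI)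
  fix y
  have "y \<in> (\<Union>k\<in>{m * t..<m * (t + 1)}. {u * k..<u * (k + 1)}) \<longleftrightarrow> y div u \<in> {m * t..<m * (t + 1)}"
    unfolding UN_iff mem_block_iff[OF assms] by blast
  then show "y \<in> {u * m * t..<u * m * (t + 1)} \<longleftrightarrow> y \<in> (\<Union>k\<in>{m * t..<m * (t + 1)}. {u * k..<u * (k + 1)})"
    unfolding mult.assoc mem_blocks_iff[OF assms] by blast
qed

lemma disjoint_family_on_blocks: "0 < u \<Longrightarrow> disjoint_family_on (\<lambda>k. {u * k..<u * (k + 1)}) K"
  for u :: nat
  unfolding disjoint_family_on_def disjoint_iff mem_block_iff by blast

lemma block_below_or_above:
  fixes u k i :: nat
  assumes "0 < u" "k \<noteq> i div u"
  shows "{u * k..<u * (k + 1)} \<subseteq> {..<i} \<or> {u * k..<u * (k + 1)} \<inter> {..<i} = {}"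
proof (cases "k < i div u")
  case True
  have "y < i" if "y div u = k" for y
    using that True div_le_mono[of i y u] by (metis not_less order.strict_trans2)
  then show ?thesis unfolding subset_iff mem_block_iff[OF assms(1)] lessThan_iff by blast
next
  case False
  then have "i div u < k" using assms(2) by simp
  have "\<not> y < i" if "y div u = k" for y
  proof
    assume "y < i"
    then have "y div u \<le> i div u" by (simp add: div_le_mono)
    then show False using that \<open>i div u < k\<close> by simp
  qed
  then show ?thesis unfolding disjoint_iff mem_block_iff[OF assms(1)] lessThan_iff by blast
qed

text \<open>The cut passes
  through at most one of the \<open>m\<close> sub-blocks; each of the others lies on one side of the cut
  and contributes its uniform value \<open>c\<close>.\<close>

lemma split_block_step:
  fixes F :: "nat set \<Rightarrow> int" and u m :: nat
  assumes F0: "F {} = 0" and sub: "\<And>S T. S \<inter> T = {} \<Longrightarrow> F (S \<union> T) \<le> F S + F T"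
    and u: "0 < u" and m: "0 < m" and t: "u * m * (t + 1) \<le> N"
    and uniform: "\<And>k. u * (k + 1) \<le> N \<Longrightarrow> F {u * k..<u * (k + 1)} = c"
    and bound: "\<And>k. u * (k + 1) \<le> N \<Longrightarrow>
      F ({u * k..<u * (k + 1)} \<inter> {..<i}) + F ({u * k..<u * (k + 1)} - {..<i}) \<le> b"
  shows "F ({u * m * t..<u * m * (t + 1)} \<inter> {..<i}) + F ({u * m * t..<u * m * (t + 1)} - {..<i})
    \<le> b + (int m - 1) * c"
proof -
  define G where "G S = F (S \<inter> {..<i}) + F (S - {..<i})" for S
  define K where "K = {m * t..<m * (t + 1)}"
  define J where "J k = {u * k..<u * (k + 1)}" for k
  have J_le: "u * (k + 1) \<le> N" if "k \<in> K" for k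
  proof -
    have "k + 1 \<le> m * (t + 1)" using that unfolding K_def atLeastLessThan_iff by linarith
    then have "u * (k + 1) \<le> u * (m * (t + 1))" by (rule mult_le_mono2)
    then show ?thesis using t by (simp only: mult.assoc)
  qed
  have "G {u * m * t..<u * m * (t + 1)} = G (\<Union>k\<in>K. J k)"
    using block_eq_UN_blocks[OF u, of m t] by (simp add: K_def J_def)
  also have "\<dots> \<le> (\<Sum>k\<in>K. G (J k))"
  proof (rule subadditive_UN_le)
    show "G {} = 0" using F0 by (simp add: G_def)
    show "G (S \<union> T) \<le> G S + G T" if "S \<inter> T = {}" for S T
      unfolding G_def by (rule cut_subadditive[where F = F, OF sub that])
    show "finite K" by (simp add: K_def)
    show "disjoint_family_on J K"
      unfolding J_def[abs_def] by (rule disjoint_family_on_blocks[OF u])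
  qed
  also have "\<dots> \<le> b + (int (card K) - 1) * c"
  proof (rule sum_le_except_one)
    show "finite K" "K \<noteq> {}" using m by (simp_all add: K_def)
    show "G (J k) \<le> b" if "k \<in> K" for k
      using bound[OF J_le[OF that]] unfolding G_def J_def .
    show "G (J k) = c" if "k \<in> K" "k \<noteq> i div u" for k
      using block_below_or_above[OF u that(2)] uniform[OF J_le[OF that(1)]] F0
      by (auto simp: G_def J_def Int_absorb2 Diff_triv Diff_eq_empty_iff[THEN iffD2])
  qed
  finally show ?thesis by (simp add: G_def K_def)
qed

lemma split_block_bound:
  fixes F :: "nat set \<Rightarrow> int" and x :: "nat \<Rightarrow> nat" and c :: "nat \<Rightarrow> int"
  assumes F0: "F {} = 0" and sub: "\<And>S T. S \<inter> T = {} \<Longrightarrow> F (S \<union> T) \<le> F S + F T"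
    and pos: "\<And>r. 1 \<le> r \<Longrightarrow> r \<le> L + 1 \<Longrightarrow> 0 < x r"
    and dvd: "\<And>r. 1 \<le> r \<Longrightarrow> r \<le> L \<Longrightarrow> x r dvd x (Suc r)"
    and uniform: "\<And>r t. 1 \<le> r \<Longrightarrow> r \<le> L \<Longrightarrow> x r * (t + 1) \<le> N \<Longrightarrow> F {x r * t..<x r * (t + 1)} = c r"
    and base: "\<And>t. x 1 * (t + 1) \<le> N \<Longrightarrow>
      F ({x 1 * t..<x 1 * (t + 1)} \<inter> {..<i}) + F ({x 1 * t..<x 1 * (t + 1)} - {..<i}) \<le> \<beta>"
  shows "1 \<le> l \<Longrightarrow> l \<le> L + 1 \<Longrightarrow> x l * (t + 1) \<le> N \<Longrightarrow>
    F ({x l * t..<x l * (t + 1)} \<inter> {..<i}) + F ({x l * t..<x l * (t + 1)} - {..<i})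
      \<le> (\<Sum>r\<in>{1..<l}. (int (x (Suc r) div x r) - 1) * c r) + \<beta>"
proof (induction l arbitrary: t)
  case (Suc l)
  show ?case
  proof (cases "l = 0")
    case True
    then show ?thesis using base Suc.prems by simp
  next
    case False
    then have l: "1 \<le> l" "l \<le> L" using Suc.prems by auto
    define m where "m = x (Suc l) div x l"
    have x: "x (Suc l) = x l * m" using dvd[OF l] by (simp add: m_def)
    have m: "0 < m" using x pos[of "Suc l"] l by (simp add: Nat.gr0I)
    have "l \<le> L + 1" using l by simp
    have "F ({x l * m * t..<x l * m * (t + 1)} \<inter> {..<i}) + F ({x l * m * t..<x l * m * (t + 1)} - {..<i})
      \<le> ((\<Sum>r\<in>{1..<l}. (int (x (Suc r) div x r) - 1) * c r) + \<beta>) + (int m - 1) * c l"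
    proof (rule split_block_step[OF F0 sub pos[OF l(1) \<open>l \<le> L + 1\<close>] m])
      show "x l * m * (t + 1) \<le> N" using Suc.prems(3) unfolding x .
      show "F {x l * k..<x l * (k + 1)} = c l" if "x l * (k + 1) \<le> N" for k
        using uniform[OF l that] .
      show "F ({x l * k..<x l * (k + 1)} \<inter> {..<i}) + F ({x l * k..<x l * (k + 1)} - {..<i})
        \<le> (\<Sum>r\<in>{1..<l}. (int (x (Suc r) div x r) - 1) * c r) + \<beta>" if "x l * (k + 1) \<le> N" for k
        using Suc.IH[OF l(1) \<open>l \<le> L + 1\<close> that] .
    qed
    moreover have "(\<Sum>r\<in>{1..<Suc l}. (int (x (Suc r) div x r) - 1) * c r)
      = (\<Sum>r\<in>{1..<l}. (int (x (Suc r) div x r) - 1) * c r) + (int m - 1) * c l"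
      using l(1) by (simp add: sum.atLeastLessThan_Suc m_def)
    ultimately show ?thesis unfolding x by (simp add: algebra_simps)
  qed
qed simp

section \<open>State complexity\<close>

lemma punct_dim_eq_punct_dim_on: "punct_dim D i = punct_dim_on D {0..<i}"
  by (simp add: punct_dim_def punct_dim_on_def wrestrict_def)

lemma past_dim_eq_short_dim_on:
  assumes "linear_code n D"
  shows "past_dim n D i = short_dim_on D {0..<i}"
proof -
  have "{c\<in>D. \<forall>j. i \<le> j \<and> j < n \<longrightarrow> c j = 0} = shortened D {0..<i}"
    using assms by (auto simp: linear_code_def shortened_def not_less) (metis linorder_not_le)
  then show ?thesis by (simp add: past_dim_def short_dim_on_def)
qed

lemma future_dim_eq_short_dim_on:
  assumes "linear_code n D"
  shows "future_dim n D i = short_dim_on D {i..<n}"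
proof -
  have "{c\<in>D. \<forall>j<i. c j = 0} = shortened D {i..<n}"
    using assms by (auto simp: linear_code_def shortened_def not_less)
  then show ?thesis by (simp add: future_dim_def short_dim_on_def)
qed

lemma state_cx_eq_short_dim_on:
  assumes "linear_code n D"
  shows "state_cx n D i = int (wdim D) - int (short_dim_on D {0..<i}) - int (short_dim_on D {i..<n})"
  using assms by (simp add: state_cx_def past_dim_eq_short_dim_on future_dim_eq_short_dim_on)

lemma state_cx_eq_punct_dim_on:
  assumes "linear_code n D" "i \<le> n"
  shows "state_cx n D i = int (punct_dim_on D {0..<i}) + int (punct_dim_on D {i..<n}) - int (wdim D)"
proof -
  have "{..<n} - {0..<i} = {i..<n}" "{..<n} - {i..<n} = {0..<i}" using assms(2) by auto
  then show ?thesis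
    using rank_nullity_wrestrict[OF assms(1), of "{0..<i}"] rank_nullity_wrestrict[OF assms(1), of "{i..<n}"]
      state_cx_eq_short_dim_on[OF assms(1)] by simp
qed

lemma sum_chain_telescope:
  fixes x :: "nat \<Rightarrow> nat"
  assumes "\<And>r. 1 \<le> r \<Longrightarrow> r \<le> L \<Longrightarrow> x r dvd x (r + 1)"
  shows "(\<Sum>r=1..L. (int (x (r + 1) div x r) - 1) * int (x r)) = int (x (L + 1)) - int (x 1)"
proof -
  have "(\<Sum>r=1..L. (int (x (r + 1) div x r) - 1) * int (x r)) = (\<Sum>r=1..L. int (x (Suc r)) - int (x r))"
  proof (rule sum.cong)
    fix r assume "r \<in> {1..L}"
    then have "int (x (r + 1)) = int (x (r + 1) div x r) * int (x r)"
      using assms by (metis atLeastAtMost_iff dvd_div_mult_self of_nat_mult)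
    then show "(int (x (r + 1) div x r) - 1) * int (x r) = int (x (Suc r)) - int (x r)"
      by (simp add: algebra_simps)
  qed simp
  also have "\<dots> = int (x (L + 1)) - int (x 1)"
    using sum_Suc_diff[where f = "\<lambda>r. int (x r)" and m = 1 and n = L] by simp
  finally show ?thesis .
qed

lemma state_cx_le_wdim: "linear_code n D \<Longrightarrow> state_cx n D i \<le> int (wdim D)"
  by (simp add: state_cx_eq_short_dim_on)

lemma state_cx_le_codim:
  assumes "linear_code n D" "i \<le> n"
  shows "state_cx n D i \<le> int n - int (wdim D)"
proof -
  have "punct_dim_on D {0..<i} + punct_dim_on D {i..<n} \<le> card {0..<i} + card {i..<n}"
    by (intro add_mono punct_dim_on_le_card) simp_all
  then show ?thesis using state_cx_eq_punct_dim_on[OF assms] assms(2) by simp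
qed

locale block_uniform_code =
  fixes n :: nat and D :: "(nat \<Rightarrow> 'a::field) set" and L :: nat and x :: "nat \<Rightarrow> nat"
  assumes linear: "linear_code n D"
    and pos: "\<And>r. 1 \<le> r \<Longrightarrow> r \<le> L + 1 \<Longrightarrow> 0 < x r"
    and dvd: "\<And>r. 1 \<le> r \<Longrightarrow> r \<le> L \<Longrightarrow> x r dvd x (r + 1)"
    and top: "x (L + 1) = n"
    and punct_uniform: "\<And>r t. 1 \<le> r \<Longrightarrow> r \<le> L \<Longrightarrow> x r * (t + 1) \<le> n \<Longrightarrow>
      punct_dim_on D {x r * t..<x r * (t + 1)} = punct_dim D (x r)"
    and short_uniform: "\<And>r t. 1 \<le> r \<Longrightarrow> r \<le> L \<Longrightarrow> x r * (t + 1) \<le> n \<Longrightarrow>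
      short_dim_on D {x r * t..<x r * (t + 1)} = past_dim n D (x r)"
begin

lemma split_whole_bound:
  fixes F :: "nat set \<Rightarrow> int" and c :: "nat \<Rightarrow> int"
  assumes "F {} = 0" "\<And>S T. S \<inter> T = {} \<Longrightarrow> F (S \<union> T) \<le> F S + F T"
    and "\<And>r t. 1 \<le> r \<Longrightarrow> r \<le> L \<Longrightarrow> x r * (t + 1) \<le> n \<Longrightarrow> F {x r * t..<x r * (t + 1)} = c r"
    and "\<And>t. x 1 * (t + 1) \<le> n \<Longrightarrow>
      F ({x 1 * t..<x 1 * (t + 1)} \<inter> {..<i}) + F ({x 1 * t..<x 1 * (t + 1)} - {..<i}) \<le> \<beta>"
    and "i \<le> n"
  shows "F {0..<i} + F {i..<n} \<le> (\<Sum>r=1..L. (int (x (r + 1) div x r) - 1) * c r) + \<beta>"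
proof -
  have "F ({x (L + 1) * 0..<x (L + 1) * (0 + 1)} \<inter> {..<i}) + F ({x (L + 1) * 0..<x (L + 1) * (0 + 1)} - {..<i})
      \<le> (\<Sum>r\<in>{1..<L + 1}. (int (x (Suc r) div x r) - 1) * c r) + \<beta>"
    using split_block_bound[where F = F and L = L and x = x and N = n and c = c and i = i
        and \<beta> = \<beta> and l = "L + 1" and t = 0] assms(1-4) pos dvd top by simp
  moreover have "{0..<n} \<inter> {..<i} = {0..<i}" "{0..<n} - {..<i} = {i..<n}" using assms(5) by auto
  ultimately show ?thesis using top by (simp add: atLeastLessThanSuc_atLeastAtMost)
qed

lemma state_cx_le_punct_bound:
  assumes "i \<le> n"
  shows "state_cx n D i \<le>
    (\<Sum>r=1..L. (int (x (r + 1) div x r) - 1) * int (punct_dim D (x r))) + int (x 1) - int (wdim D)"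
proof -
  have "int (punct_dim_on D {0..<i}) + int (punct_dim_on D {i..<n})
      \<le> (\<Sum>r=1..L. (int (x (r + 1) div x r) - 1) * int (punct_dim D (x r))) + int (x 1)"
  proof (rule split_whole_bound[where F = "\<lambda>S. int (punct_dim_on D S)"])
    show "int (punct_dim_on D {}) = 0" using punct_dim_on_empty[OF linear] by simp
    show "int (punct_dim_on D (S \<union> T)) \<le> int (punct_dim_on D S) + int (punct_dim_on D T)"
      if "S \<inter> T = {}" for S T using punct_dim_on_Un_le[OF linear that] by simp
    show "int (punct_dim_on D {x r * t..<x r * (t + 1)}) = int (punct_dim D (x r))"
      if "1 \<le> r" "r \<le> L" "x r * (t + 1) \<le> n" for r t using punct_uniform[OF that] by simp
    show "int (punct_dim_on D ({x 1 * t..<x 1 * (t + 1)} \<inter> {..<i}))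
        + int (punct_dim_on D ({x 1 * t..<x 1 * (t + 1)} - {..<i})) \<le> int (x 1)" for t
    proof -
      define J where "J = {x 1 * t..<x 1 * (t + 1)}"
      have "punct_dim_on D (J \<inter> {..<i}) + punct_dim_on D (J - {..<i}) \<le> card (J \<inter> {..<i}) + card (J - {..<i})"
        by (intro add_mono punct_dim_on_le_card) (simp_all add: J_def)
      also have "\<dots> = card J" using card_Int_Diff[of J "{..<i}"] by (simp add: J_def)
      finally show ?thesis by (simp add: J_def)
    qed
  qed (use assms in simp)
  then show ?thesis using state_cx_eq_punct_dim_on[OF linear assms] by simp
qed

lemma state_cx_le_short_bound:
  assumes "i \<le> n"
  shows "state_cx n D i \<le>
    (\<Sum>r=1..L. (int (x (r + 1) div x r) - 1) * (int (x r) - int (past_dim n D (x r))))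
      + int (x 1) - (int n - int (wdim D))"
proof -
  have "- int (short_dim_on D {0..<i}) + - int (short_dim_on D {i..<n})
      \<le> (\<Sum>r=1..L. (int (x (r + 1) div x r) - 1) * - int (past_dim n D (x r))) + 0"
  proof (rule split_whole_bound[where F = "\<lambda>S. - int (short_dim_on D S)"])
    show "- int (short_dim_on D {}) = 0" using short_dim_on_empty[OF linear] by simp
    show "- int (short_dim_on D (S \<union> T)) \<le> - int (short_dim_on D S) + - int (short_dim_on D T)"
      if "S \<inter> T = {}" for S T using short_dim_on_Un_ge[OF linear that] by simp
    show "- int (short_dim_on D {x r * t..<x r * (t + 1)}) = - int (past_dim n D (x r))"
      if "1 \<le> r" "r \<le> L" "x r * (t + 1) \<le> n" for r t using short_uniform[OF that] by simp
  qed (use assms in simp_all)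
  moreover have "(\<Sum>r=1..L. (int (x (r + 1) div x r) - 1) * int (x r)) = int n - int (x 1)"
    using sum_chain_telescope[of L x] dvd top by simp
  ultimately show ?thesis
    using state_cx_eq_short_dim_on[OF linear, of i]
    by (simp add: algebra_simps sum.distrib sum_subtractf)
qed

end

lemma divisor_chain_sorted_dvd:
  assumes "divisor_chain n xs"
  shows "sorted_wrt (\<lambda>a b. b dvd a) (n # rev xs)"
proof -
  have "transp ((dvd) :: nat \<Rightarrow> nat \<Rightarrow> bool)" by (auto intro: transpI dvd_trans)
  then have "sorted_wrt (dvd) xs"
    using assms by (simp add: sorted_wrt_iff_nth_Suc_transp divisor_chain_def)
  then show ?thesis using assms by (simp add: sorted_wrt_rev divisor_chain_def)
qed

lemma divisor_chain_mem_dvd: "divisor_chain n xs \<Longrightarrow> u \<in> insert n (set xs) \<Longrightarrow> u dvd n"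
  by (auto simp: divisor_chain_def)

lemma gamma_order_permutation:
  assumes "divisor_chain n xs" "0 < n"
  shows "coordinate_permutation n (gamma_order n xs)"
proof
  have "set (gamma_order n xs) = support_set n 1 0 \<and> length (gamma_order n xs) = n"
    using gam_dfs_set_length[OF divisor_chain_sorted_dvd[OF assms(1)] assms(2)] assms(2)
    by (simp add: gamma_order_def)
  moreover have "support_set n 1 0 = {..<n}" by (auto simp: support_set_def)
  ultimately show "set (gamma_order n xs) = {..<n}" "distinct (gamma_order n xs)"
    by (simp_all add: card_distinct)
qed

lemma gamma_order_block:
  assumes "divisor_chain n xs" "0 < n" "u \<in> insert n (set xs)" "u * (t + 1) \<le> n"
  shows "\<exists>a < n div u. (!) (gamma_order n xs) ` {u * t..<u * (t + 1)} = support_set n (n div u) a"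
proof -
  have "length (gamma_order n xs) = n"
    using gamma_order_permutation[OF assms(1,2)] coordinate_permutation.length_eq by blast
  then have "set (take u (drop (u * t) (gamma_order n xs))) = (!) (gamma_order n xs) ` {u * t..<u * (t + 1)}"
    using set_take_drop[of "u * t" u "gamma_order n xs"] assms(4) by (simp add: algebra_simps)
  moreover have "u \<in> set (n # rev xs)" using assms(3) by simp
  ultimately show ?thesis
    using gam_dfs_block[OF divisor_chain_sorted_dvd[OF assms(1)] assms(2) dvd_refl _ _ assms(4)] assms(2)
    by (simp add: gamma_order_def)
qed

lemma gamma_order_block_rotation_invariant:
  fixes \<Phi> :: "nat set \<Rightarrow> 'b::order"
  assumes mono: "\<And>S. S \<subseteq> {..<n} \<Longrightarrow> \<Phi> S \<le> \<Phi> (rotate_set n 1 S)"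
    and "divisor_chain n xs" "0 < n" "u \<in> insert n (set xs)" "u * (t + 1) \<le> n"
  shows "\<Phi> ((!) (gamma_order n xs) ` {u * t..<u * (t + 1)}) = \<Phi> ((!) (gamma_order n xs) ` {0..<u})"
proof -
  have u: "u dvd n" using divisor_chain_mem_dvd assms(2,4) .
  have m: "n div u dvd n" "0 < n div u"
    using u assms(3) by (auto simp: dvd_div_iff_mult dvd_imp_le div_greater_zero_iff)
  have block: "\<Phi> ((!) (gamma_order n xs) ` {u * s..<u * (s + 1)}) = \<Phi> (support_set n (n div u) 0)"
    if s: "u * (s + 1) \<le> n" for s
  proof -
    obtain a where a: "a < n div u"
      and image: "(!) (gamma_order n xs) ` {u * s..<u * (s + 1)} = support_set n (n div u) a"
      using gamma_order_block[OF assms(2,3,4) s] by blast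
    show ?thesis
      unfolding image by (rule support_set_rotation_invariant[where \<Phi> = \<Phi>, OF mono assms(3) m a])
  qed
  have "u * (0 + 1) \<le> n" using u assms(3) by (simp add: dvd_imp_le)
  from block[OF this] block[OF assms(5)] show ?thesis by simp
qed

lemma gamma_block_uniform:
  assumes C: "cyclic_code n C" and chain: "divisor_chain n xs" and n: "0 < n"
    and u: "u \<in> insert n (set xs)" "u * (t + 1) \<le> n"
  defines "C' \<equiv> permute_code n (gamma_order n xs) C"
  shows "punct_dim_on C' {u * t..<u * (t + 1)} = punct_dim C' u"
    and "short_dim_on C' {u * t..<u * (t + 1)} = past_dim n C' u"
proof -
  interpret coordinate_permutation n "gamma_order n xs"
    using gamma_order_permutation[OF chain n] .
  have lin: "linear_code n C" using C by (simp add: cyclic_code_def)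
  have "u \<le> n" using u(2) by (simp add: le_trans[of u "u * (t + 1)"])
  have sub_t: "{u * t..<u * (t + 1)} \<subseteq> {..<n}" and sub_0: "{0..<u} \<subseteq> {..<n}"
    using u(2) \<open>u \<le> n\<close> by auto
  have "punct_dim_on C' {u * t..<u * (t + 1)} = punct_dim_on C ((!) (gamma_order n xs) ` {u * t..<u * (t + 1)})"
    unfolding C'_def by (rule punct_dim_on_permute_code[OF lin sub_t])
  also have "\<dots> = punct_dim_on C ((!) (gamma_order n xs) ` {0..<u})"
    by (rule gamma_order_block_rotation_invariant[where \<Phi> = "punct_dim_on C",
          OF punct_dim_on_le_rotate_set[OF C n] chain n u])
  also have "\<dots> = punct_dim_on C' {0..<u}"
    unfolding C'_def by (rule punct_dim_on_permute_code[OF lin sub_0, symmetric])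
  finally show "punct_dim_on C' {u * t..<u * (t + 1)} = punct_dim C' u"
    by (simp only: punct_dim_eq_punct_dim_on)
  have "short_dim_on C' {u * t..<u * (t + 1)} = short_dim_on C ((!) (gamma_order n xs) ` {u * t..<u * (t + 1)})"
    unfolding C'_def by (rule short_dim_on_permute_code[OF lin sub_t])
  also have "\<dots> = short_dim_on C ((!) (gamma_order n xs) ` {0..<u})"
    by (rule gamma_order_block_rotation_invariant[where \<Phi> = "short_dim_on C",
          OF short_dim_on_le_rotate_set[OF C n] chain n u])
  also have "\<dots> = short_dim_on C' {0..<u}"
    unfolding C'_def by (rule short_dim_on_permute_code[OF lin sub_0, symmetric])
  finally show "short_dim_on C' {u * t..<u * (t + 1)} = past_dim n C' u"
    using past_dim_eq_short_dim_on[OF linear_code_permute_code[OF lin]] by (simp only: C'_def)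
qed

lemma divisor_chain_index:
  assumes "divisor_chain n xs"
    and x_def: "\<And>i. x i = (if 1 \<le> i \<and> i \<le> length xs then xs ! (i - 1) else n)"
  shows "\<And>r. 1 \<le> r \<Longrightarrow> r \<le> length xs + 1 \<Longrightarrow> x r \<in> insert n (set xs)"
    and "\<And>r. 1 \<le> r \<Longrightarrow> r \<le> length xs \<Longrightarrow> x r dvd x (r + 1)"
    and "x (length xs + 1) = n"
proof -
  show "x r \<in> insert n (set xs)" if "1 \<le> r" "r \<le> length xs + 1" for r
    using that by (auto simp: x_def)
  show "x r dvd x (r + 1)" if "1 \<le> r" "r \<le> length xs" for r
  proof (cases "r = length xs")
    case True
    then show ?thesis using that assms(1) by (auto simp: x_def divisor_chain_def)
  next
    case False
    then have "Suc (r - 1) < length xs" using that by simp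
    then have "xs ! (r - 1) dvd xs ! Suc (r - 1)" using assms(1) by (simp add: divisor_chain_def)
    then show ?thesis using that False by (simp add: x_def)
  qed
  show "x (length xs + 1) = n" by (simp add: x_def)
qed

theorem theorem3:
  fixes C :: "(nat \<Rightarrow> 'a::{finite,field}) set" and n k :: nat and xs :: "nat list"
  assumes "cyclic_code n C"
    and "wdim C = k"
    and "coprime n (card (UNIV :: 'a set))"
    and "1 < n" and "\<not> prime n"
    and "divisor_chain n xs"
  defines "C' \<equiv> permute_code n (gamma_order n xs) C"
    and "L \<equiv> length xs"
    and "x \<equiv> (\<lambda>i. if 1 \<le> i \<and> i \<le> length xs then xs ! (i - 1) else n)"
  shows "Max ((\<lambda>i. state_cx n C' i) ` {0..n}) \<le>
    min (min (int k) (int n - int k))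
        (min ((\<Sum>i=1..L. (int (x (i+1) div x i) - 1) * int (punct_dim C' (x i))) + int (x 1) - int k)
             ((\<Sum>i=1..L. (int (x (i+1) div x i) - 1) * (int (x i) - int (past_dim n C' (x i))))
                + int (x 1) - (int n - int k)))"
proof -
  have n: "0 < n" using assms(4) by simp
  have lin: "linear_code n C" using assms(1) by (simp add: cyclic_code_def)
  interpret coordinate_permutation n "gamma_order n xs"
    using gamma_order_permutation[OF assms(6) n] .
  have "x i = (if 1 \<le> i \<and> i \<le> length xs then xs ! (i - 1) else n)" for i
    by (simp add: x_def)
  note chain = divisor_chain_index[OF assms(6) this, folded L_def]
  have pos: "0 < x r" if "1 \<le> r" "r \<le> L + 1" for r
    using divisor_chain_mem_dvd[OF assms(6) chain(1)[OF that]] n by (simp add: dvd_pos_nat)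
  interpret block_uniform_code n C' L x
    using linear_code_permute_code[OF lin] pos chain(2,3)
      gamma_block_uniform[OF assms(1,6) n chain(1), folded C'_def]
    by unfold_locales (simp_all add: C'_def)
  have "wdim C' = k" using wdim_permute_code[OF lin] assms(2) by (simp add: C'_def)
  then show ?thesis
    using state_cx_le_wdim[OF linear] state_cx_le_codim[OF linear]
      state_cx_le_punct_bound state_cx_le_short_bound by (simp add: Max_le_iff)
qed

end
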